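(* In the setting described in the context, for each $\hat{i}\in I$ let $t_{\hat{i}}$ be the optimal value and $\alpha^{(\hat{i})}$ an optimal solution of \[ \min_{\alpha}\ \sum_{j\in J}a_{\hat{i}j}\hat{x}_j-\sum_{j\in J_{\hat{i}}}\alpha_{\hat{i}j}|\hat{x}_j|-b_{\hat{i}} \] subject to $\sum_{j\in J}a_{ij}\hat{x}_j-\sum_{j\in J_i}\alpha_{ij}|\hat{x}_j|\ge b_i$ for all $i\in I$, $\alpha\in\Omega$, $\alpha\ge0$. Let $i^*\in\arg\min_{\hat{i}\in I}t_{\hat{i}}$ and $\alpha^*=\alpha^{(i^* )}$. Then the optimal value of RLO-IU-DG is $t_{i^*}$, and there exists an optimal solution of RLO-IU-DG with $\alpha_i=\alpha^*_i$ for all $i\in I$, $c=\bar{a}_{i^*}(\alpha^*_{i^*},\hat{x})$, and $\pi=e_{i^*}$. Moreover, if for every $i\in I$ either $b_i>0$ or $a_{ij}\neq0$ for some $j\in J\setminus J_i$, then this solution satisfies $c\neq0$ and $\bar{a}_i(\alpha_i,x)\neq0$ for all $i\in I$ and all $x\in\mathbb{R}^n$.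
   Context: Let $I=\{1,\dots,m\}$, $J=\{1,\dots,n\}$. Given are $a_{ij}\in\mathbb{R}$ ($i\in I,j\in J$), $b\in\mathbb{R}^m$, nonempty index sets $J_i\subseteq J$ ($i\in I$), an observed point $\hat{x}\in\mathbb{R}^n$, and a convex set $\Omega$ of collections $\alpha=(\alpha_{ij})_{j\in J_i,i\in I}$; $\alpha_i$ denotes $(\alpha_{ij})_{j\in J_i}$. Let $\mathrm{sgn}(t)=1$ if $t\ge0$ and $-1$ otherwise, and $e_i$ the $i$-th unit vector of $\mathbb{R}^m$. For $\alpha_i\ge0$ and $x\in\mathbb{R}^n$, $\bar{a}_i(\alpha_i,x)\in\mathbb{R}^n$ has components $\bar{a}_{ij}(\alpha_i,x)=a_{ij}-\mathrm{sgn}(x_j)\alpha_{ij}$ if $j\in J_i$ and $\bar{a}_{ij}(\alpha_i,x)=a_{ij}$ if $j\in J\setminus J_i$. The problem RLO-IU-DG is \[ \min_{\alpha,c,u,\pi,\lambda,\mu}\ \sum_{j\in J}c_j\hat{x}_j-\sum_{i\in I}b_i\pi_i \] subject to: $\alpha\in\Omega$; $\alpha_{ij}\hat{x}_j+u_{ij}\ge0$ and $-\alpha_{ij}\hat{x}_j+u_{ij}\ge0$ for all $j\in J_i,i\in I$; $\sum_{j\in J}a_{ij}\hat{x}_j-\sum_{j\in J_i}u_{ij}\ge b_i$ for all $i\in I$; $\alpha_{ij}\ge0$ for all $j\in J_i,i\in I$; $\sum_{i\in I}\pi_i=1$; $\sum_{i\in I}a_{ij}\pi_i+\sum_{i\in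 I:j\in J_i}\alpha_{ij}(\lambda_{ij}-\mu_{ij})=c_j$ for all $j\in J$; $\pi_i=\lambda_{ij}+\mu_{ij}$ for all $j\in J_i,i\in I$; $\pi_i,\lambda_{ij},\mu_{ij}\ge0$ for all $j\in J_i,i\in I$. Here $c\in\mathbb{R}^n$, $\pi\in\mathbb{R}^m$, and $u_{ij},\lambda_{ij},\mu_{ij}$ are real variables indexed by $j\in J_i,i\in I$. *)

theory Defs
  imports Complex_Main
begin

text \<open>Index sets I and J are the (finite, nonempty) universes of type variables 'i and 'j.
Collections indexed by j in J_i, i in I are represented as functions 'i => 'j => real that
vanish outside J_i.\<close>

definition coll :: "('i \<Rightarrow> 'j set) \<Rightarrow> ('i \<Rightarrow> 'j \<Rightarrow> real) set" where
  "coll Js = {f. \<forall>i j. j \<notin> Js i \<longrightarrow> f i j = 0}"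

definition convex_coll :: "('i \<Rightarrow> 'j \<Rightarrow> real) set \<Rightarrow> bool" where
  "convex_coll \<Omega> \<longleftrightarrow> (\<forall>x\<in>\<Omega>. \<forall>y\<in>\<Omega>. \<forall>t::real. 0 \<le> t \<and> t \<le> 1 \<longrightarrow>
      (\<lambda>i j. t * x i j + (1 - t) * y i j) \<in> \<Omega>)"

definition sgnp :: "real \<Rightarrow> real" where
  "sgnp t = (if t \<ge> 0 then 1 else -1)"

definition unitv :: "'i \<Rightarrow> 'i \<Rightarrow> real" where
  "unitv i = (\<lambda>k. if k = i then 1 else 0)"

definition abar :: "('i \<Rightarrow> 'j \<Rightarrow> real) \<Rightarrow> ('i \<Rightarrow> 'j set) \<Rightarrow> ('i \<Rightarrow> 'j \<Rightarrow> real)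
    \<Rightarrow> 'i \<Rightarrow> ('j \<Rightarrow> real) \<Rightarrow> 'j \<Rightarrow> real" where
  "abar a Js \<alpha> i x = (\<lambda>j. if j \<in> Js i then a i j - sgnp (x j) * \<alpha> i j else a i j)"

definition rlo_feasible ::
  "('i::finite \<Rightarrow> 'j::finite \<Rightarrow> real) \<Rightarrow> ('i \<Rightarrow> real) \<Rightarrow> ('i \<Rightarrow> 'j set)
   \<Rightarrow> ('i \<Rightarrow> 'j \<Rightarrow> real) set \<Rightarrow> ('j \<Rightarrow> real)
   \<Rightarrow> ('i \<Rightarrow> 'j \<Rightarrow> real) \<Rightarrow> ('j \<Rightarrow> real) \<Rightarrow> ('i \<Rightarrow> 'j \<Rightarrow> real) \<Rightarrow> ('i \<Rightarrow> real)
   \<Rightarrow> ('i \<Rightarrow> 'j \<Rightarrow> real) \<Rightarrow> ('i \<Rightarrow> 'j \<Rightarrow> real) \<Rightarrow> bool" where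
  "rlo_feasible a b Js \<Omega> xh \<alpha> c u \<pi> lam \<mu> \<longleftrightarrow>
     \<alpha> \<in> \<Omega> \<and> \<alpha> \<in> coll Js \<and> u \<in> coll Js \<and> lam \<in> coll Js \<and> \<mu> \<in> coll Js \<and>
     (\<forall>i. \<forall>j\<in>Js i. \<alpha> i j * xh j + u i j \<ge> 0 \<and> - \<alpha> i j * xh j + u i j \<ge> 0) \<and>
     (\<forall>i. (\<Sum>j\<in>UNIV. a i j * xh j) - (\<Sum>j\<in>Js i. u i j) \<ge> b i) \<and>
     (\<forall>i. \<forall>j\<in>Js i. \<alpha> i j \<ge> 0) \<and>
     (\<Sum>i\<in>UNIV. \<pi> i) = 1 \<and>
     (\<forall>j. (\<Sum>i\<in>UNIV. a i j * \<pi> i) + (\<Sum>i\<in>{i. j \<in> Js i}. \<alpha> i j * (lam i j - \<mu> i j)) = c j) \<and>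
     (\<forall>i. \<forall>j\<in>Js i. \<pi> i = lam i j + \<mu> i j) \<and>
     (\<forall>i. \<pi> i \<ge> 0) \<and>
     (\<forall>i. \<forall>j\<in>Js i. lam i j \<ge> 0 \<and> \<mu> i j \<ge> 0)"

definition rlo_obj :: "('i::finite \<Rightarrow> real) \<Rightarrow> ('j::finite \<Rightarrow> real) \<Rightarrow> ('j \<Rightarrow> real)
    \<Rightarrow> ('i \<Rightarrow> real) \<Rightarrow> real" where
  "rlo_obj b xh c \<pi> = (\<Sum>j\<in>UNIV. c j * xh j) - (\<Sum>i\<in>UNIV. b i * \<pi> i)"

definition sub_feasible ::
  "('i::finite \<Rightarrow> 'j::finite \<Rightarrow> real) \<Rightarrow> ('i \<Rightarrow> real) \<Rightarrow> ('i \<Rightarrow> 'j set)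
   \<Rightarrow> ('i \<Rightarrow> 'j \<Rightarrow> real) set \<Rightarrow> ('j \<Rightarrow> real) \<Rightarrow> ('i \<Rightarrow> 'j \<Rightarrow> real) \<Rightarrow> bool" where
  "sub_feasible a b Js \<Omega> xh \<alpha> \<longleftrightarrow>
     \<alpha> \<in> \<Omega> \<and> \<alpha> \<in> coll Js \<and>
     (\<forall>i. (\<Sum>j\<in>UNIV. a i j * xh j) - (\<Sum>j\<in>Js i. \<alpha> i j * \<bar>xh j\<bar>) \<ge> b i) \<and>
     (\<forall>i. \<forall>j\<in>Js i. \<alpha> i j \<ge> 0)"

definition sub_obj ::
  "('i::finite \<Rightarrow> 'j::finite \<Rightarrow> real) \<Rightarrow> ('i \<Rightarrow> real) \<Rightarrow> ('i \<Rightarrow> 'j set)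
   \<Rightarrow> ('j \<Rightarrow> real) \<Rightarrow> 'i \<Rightarrow> ('i \<Rightarrow> 'j \<Rightarrow> real) \<Rightarrow> real" where
  "sub_obj a b Js xh ih \<alpha> =
     (\<Sum>j\<in>UNIV. a ih j * xh j) - (\<Sum>j\<in>Js ih. \<alpha> ih j * \<bar>xh j\<bar>) - b ih"

end

theory Submission
  imports Defs
begin

text \<open>Weak duality: at a feasible point of RLO-IU-DG the bounds \<open>u\<^sub>i\<^sub>j \<ge> \<alpha>\<^sub>i\<^sub>j |xh\<^sub>j|\<close>
  make \<open>\<alpha>\<close> feasible for every auxiliary problem, and since \<open>|\<lambda>\<^sub>i\<^sub>j - \<mu>\<^sub>i\<^sub>j| \<le> \<pi>\<^sub>i\<close>,
  expanding \<open>c\<close> bounds the objective below by \<open>\<Sum>\<^sub>i \<pi>\<^sub>i t\<^sub>i(\<alpha>)\<close>, a convex combination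
  of auxiliary objective values, hence by \<open>t\<^sub>i\<^sub>*\<close>. The bound is attained at \<open>\<pi> = e\<^sub>i\<^sub>*\<close>,
  \<open>u\<^sub>i\<^sub>j = \<alpha>\<^sub>i\<^sub>j |xh\<^sub>j|\<close>, with \<open>\<lambda>, \<mu>\<close> putting the whole weight on the sign opposite to
  \<open>xh\<^sub>j\<close>. Finally, \<open>abar\<^sub>i(\<alpha>\<^sub>i, x) = 0\<close> forces \<open>|a\<^sub>i\<^sub>j| = \<alpha>\<^sub>i\<^sub>j\<close> on \<open>J\<^sub>i\<close> and
  \<open>a\<^sub>i\<^sub>j = 0\<close> off it, so \<open>\<Sum>\<^sub>j a\<^sub>i\<^sub>j xh\<^sub>j \<le> \<Sum>\<^sub>j \<alpha>\<^sub>i\<^sub>j |xh\<^sub>j|\<close> and feasibility of \<open>\<alpha>\<close>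
  gives \<open>b\<^sub>i \<le> 0\<close>.\<close>

lemma coll_sum_row:
  fixes f :: "'i \<Rightarrow> 'j::finite \<Rightarrow> real"
  assumes "f \<in> coll Js"
  shows "(\<Sum>j\<in>Js i. f i j * g j) = (\<Sum>j\<in>UNIV. f i j * g j)"
  using assms by (intro sum.mono_neutral_left) (auto simp: coll_def)

lemma coll_sum_column:
  fixes f :: "'i::finite \<Rightarrow> 'j \<Rightarrow> real"
  assumes "f \<in> coll Js"
  shows "(\<Sum>i\<in>{i. j \<in> Js i}. f i j * g i) = (\<Sum>i\<in>UNIV. f i j * g i)"
  using assms by (intro sum.mono_neutral_left) (auto simp: coll_def)

lemma sub_feasible_nonneg:
  assumes "sub_feasible a b Js \<Omega> xh \<alpha>"
  shows "0 \<le> \<alpha> i j"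
  using assms by (cases "j \<in> Js i") (auto simp: sub_feasible_def coll_def)

lemma sub_obj_eq_sum:
  assumes "\<alpha> \<in> coll Js"
  shows "sub_obj a b Js xh i \<alpha> = (\<Sum>j\<in>UNIV. a i j * xh j - \<alpha> i j * \<bar>xh j\<bar>) - b i"
  using coll_sum_row[OF assms, of i "\<lambda>j. \<bar>xh j\<bar>"] by (simp add: sub_obj_def sum_subtractf)

lemma abar_mult_self:
  assumes "\<alpha> \<in> coll Js"
  shows "abar a Js \<alpha> i x j * x j = a i j * x j - \<alpha> i j * \<bar>x j\<bar>"
  using assms by (auto simp: abar_def sgnp_def coll_def algebra_simps)

lemma neg_abs_le_mult_diff:
  fixes w l m x :: real
  assumes "0 \<le> w" "0 \<le> l" "0 \<le> m"
  shows "- ((l + m) * (w * \<bar>x\<bar>)) \<le> w * (l - m) * x"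
proof (cases "0 \<le> x")
  case True
  then have "0 \<le> w * l * x" using assms by simp
  with True show ?thesis by (simp add: algebra_simps)
next
  case False
  then have "w * m * x \<le> 0" using assms by (simp add: mult_nonneg_nonpos)
  with False show ?thesis by (simp add: algebra_simps)
qed

lemma rlo_feasible_imp_sub_feasible:
  assumes F: "rlo_feasible a b Js \<Omega> xh \<alpha> c u \<pi> lam \<mu>"
  shows "sub_feasible a b Js \<Omega> xh \<alpha>"
  unfolding sub_feasible_def
proof (intro conjI allI ballI)
  show "\<alpha> \<in> \<Omega>" "\<alpha> \<in> coll Js" using F by (simp_all add: rlo_feasible_def)
  show "0 \<le> \<alpha> i j" if "j \<in> Js i" for i j using F that by (simp add: rlo_feasible_def)
  fix i
  have "\<alpha> i j * \<bar>xh j\<bar> \<le> u i j" if "j \<in> Js i" for j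
  proof -
    have "0 \<le> \<alpha> i j" "0 \<le> \<alpha> i j * xh j + u i j" "0 \<le> - \<alpha> i j * xh j + u i j"
      using F that by (auto simp: rlo_feasible_def)
    then show ?thesis by (simp add: abs_mult abs_le_iff)
  qed
  then have "(\<Sum>j\<in>Js i. \<alpha> i j * \<bar>xh j\<bar>) \<le> (\<Sum>j\<in>Js i. u i j)" by (rule sum_mono)
  moreover have "b i \<le> (\<Sum>j\<in>UNIV. a i j * xh j) - (\<Sum>j\<in>Js i. u i j)"
    using F by (auto simp: rlo_feasible_def)
  ultimately show "b i \<le> (\<Sum>j\<in>UNIV. a i j * xh j) - (\<Sum>j\<in>Js i. \<alpha> i j * \<bar>xh j\<bar>)"
    by linarith
qed

lemma rlo_obj_eq_sum_rows:
  assumes F: "rlo_feasible a b Js \<Omega> xh \<alpha> c u \<pi> lam \<mu>"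
  shows "rlo_obj b xh c \<pi> =
    (\<Sum>i\<in>UNIV. (\<Sum>j\<in>UNIV. \<pi> i * a i j * xh j + \<alpha> i j * (lam i j - \<mu> i j) * xh j) - \<pi> i * b i)"
proof -
  have coll: "\<alpha> \<in> coll Js" using F by (simp add: rlo_feasible_def)
  have c: "c j = (\<Sum>i\<in>UNIV. a i j * \<pi> i + \<alpha> i j * (lam i j - \<mu> i j))" for j
  proof -
    have "(\<Sum>i\<in>UNIV. a i j * \<pi> i) + (\<Sum>i\<in>{i. j \<in> Js i}. \<alpha> i j * (lam i j - \<mu> i j)) = c j"
      using F by (simp add: rlo_feasible_def)
    then show ?thesis by (simp add: coll_sum_column[OF coll] sum.distrib)
  qed
  have "(\<Sum>j\<in>UNIV. c j * xh j) =
      (\<Sum>j\<in>UNIV. \<Sum>i\<in>UNIV. \<pi> i * a i j * xh j + \<alpha> i j * (lam i j - \<mu> i j) * xh j)"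
    unfolding c sum_distrib_right by (simp add: algebra_simps)
  also have "\<dots> = (\<Sum>i\<in>UNIV. \<Sum>j\<in>UNIV. \<pi> i * a i j * xh j + \<alpha> i j * (lam i j - \<mu> i j) * xh j)"
    by (rule sum.swap)
  finally show ?thesis
    unfolding rlo_obj_def by (simp add: sum_subtractf mult.commute)
qed

lemma rlo_obj_ge_weighted_sub_obj:
  assumes F: "rlo_feasible a b Js \<Omega> xh \<alpha> c u \<pi> lam \<mu>"
  shows "(\<Sum>i\<in>UNIV. \<pi> i * sub_obj a b Js xh i \<alpha>) \<le> rlo_obj b xh c \<pi>"
proof -
  have coll: "\<alpha> \<in> coll Js" using F by (simp add: rlo_feasible_def)
  have entry: "- (\<pi> i * (\<alpha> i j * \<bar>xh j\<bar>)) \<le> \<alpha> i j * (lam i j - \<mu> i j) * xh j" for i j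
  proof (cases "j \<in> Js i")
    case True
    then have "\<pi> i = lam i j + \<mu> i j" "0 \<le> \<alpha> i j" "0 \<le> lam i j" "0 \<le> \<mu> i j"
      using F by (auto simp: rlo_feasible_def)
    then show ?thesis using neg_abs_le_mult_diff by simp
  next
    case False
    then show ?thesis using coll by (simp add: coll_def)
  qed
  have "\<pi> i * sub_obj a b Js xh i \<alpha> \<le>
      (\<Sum>j\<in>UNIV. \<pi> i * a i j * xh j + \<alpha> i j * (lam i j - \<mu> i j) * xh j) - \<pi> i * b i" for i
  proof -
    have "\<pi> i * sub_obj a b Js xh i \<alpha> =
        (\<Sum>j\<in>UNIV. \<pi> i * a i j * xh j - \<pi> i * (\<alpha> i j * \<bar>xh j\<bar>)) - \<pi> i * b i"
      unfolding sub_obj_eq_sum[OF coll] by (simp add: sum_distrib_left algebra_simps)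
    also have "\<dots> \<le> (\<Sum>j\<in>UNIV. \<pi> i * a i j * xh j + \<alpha> i j * (lam i j - \<mu> i j) * xh j) - \<pi> i * b i"
      using entry by (intro diff_right_mono sum_mono) (simp add: add_left_mono)
    finally show ?thesis .
  qed
  then show ?thesis unfolding rlo_obj_eq_sum_rows[OF F] by (rule sum_mono)
qed

lemma rlo_obj_lower_bound:
  assumes F: "rlo_feasible a b Js \<Omega> xh \<alpha> c u \<pi> lam \<mu>"
    and bound: "\<And>\<alpha>' i. sub_feasible a b Js \<Omega> xh \<alpha>' \<Longrightarrow> s \<le> sub_obj a b Js xh i \<alpha>'"
  shows "s \<le> rlo_obj b xh c \<pi>"
proof -
  have "s = (\<Sum>i\<in>UNIV. \<pi> i * s)"
    using F by (simp add: rlo_feasible_def sum_distrib_right[symmetric])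
  also have "\<dots> \<le> (\<Sum>i\<in>UNIV. \<pi> i * sub_obj a b Js xh i \<alpha>)"
    using F bound[OF rlo_feasible_imp_sub_feasible[OF F]]
    by (intro sum_mono mult_left_mono) (auto simp: rlo_feasible_def)
  also have "\<dots> \<le> rlo_obj b xh c \<pi>" by (rule rlo_obj_ge_weighted_sub_obj[OF F])
  finally show ?thesis .
qed

lemma rlo_feasible_at_unitv:
  assumes S: "sub_feasible a b Js \<Omega> xh \<alpha>"
  shows "rlo_feasible a b Js \<Omega> xh \<alpha> (abar a Js \<alpha> k xh)
           (\<lambda>i j. if j \<in> Js i then \<alpha> i j * \<bar>xh j\<bar> else 0) (unitv k)
           (\<lambda>i j. if i = k \<and> j \<in> Js i \<and> xh j < 0 then 1 else 0)
           (\<lambda>i j. if i = k \<and> j \<in> Js i \<and> 0 \<le> xh j then 1 else 0)"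
    (is "rlo_feasible _ _ _ _ _ _ _ ?u _ ?lam ?\<mu>")
  unfolding rlo_feasible_def
proof (intro conjI allI ballI)
  show "\<alpha> \<in> \<Omega>" "\<alpha> \<in> coll Js" using S by (simp_all add: sub_feasible_def)
  show "?u \<in> coll Js" "?lam \<in> coll Js" "?\<mu> \<in> coll Js" by (auto simp: coll_def)
  show "(\<Sum>i\<in>UNIV. unitv k i) = 1" by (simp add: unitv_def)
  fix i
  show "0 \<le> \<alpha> i j" for j using sub_feasible_nonneg[OF S] .
  show "0 \<le> \<alpha> i j * xh j + ?u i j" "0 \<le> - \<alpha> i j * xh j + ?u i j" if "j \<in> Js i" for j
  proof -
    have "\<alpha> i j * \<bar>xh j\<bar> = \<bar>\<alpha> i j * xh j\<bar>"
      using sub_feasible_nonneg[OF S] by (simp add: abs_mult)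
    then show "0 \<le> \<alpha> i j * xh j + ?u i j" "0 \<le> - \<alpha> i j * xh j + ?u i j"
      using that by simp_all
  qed
  show "b i \<le> (\<Sum>j\<in>UNIV. a i j * xh j) - (\<Sum>j\<in>Js i. ?u i j)"
    using S by (simp add: sub_feasible_def)
  show "unitv k i = ?lam i j + ?\<mu> i j" if "j \<in> Js i" for j
    using that by (simp add: unitv_def)
  show "0 \<le> unitv k i" "0 \<le> ?lam i j" "0 \<le> ?\<mu> i j" for j by (simp_all add: unitv_def)
next
  fix j
  have "(\<Sum>i\<in>{i. j \<in> Js i}. \<alpha> i j * (?lam i j - ?\<mu> i j)) =
      (\<Sum>i\<in>UNIV. \<alpha> i j * (?lam i j - ?\<mu> i j))"
    using S by (intro coll_sum_column) (simp add: sub_feasible_def)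
  also have "\<dots> = (\<Sum>i\<in>UNIV. if i = k then \<alpha> k j * (?lam k j - ?\<mu> k j) else 0)"
    by (rule sum.cong) auto
  also have "\<dots> = - sgnp (xh j) * \<alpha> k j"
    using S by (simp add: sgnp_def sub_feasible_def coll_def)
  finally show "(\<Sum>i\<in>UNIV. a i j * unitv k i) + (\<Sum>i\<in>{i. j \<in> Js i}. \<alpha> i j * (?lam i j - ?\<mu> i j))
      = abar a Js \<alpha> k xh j"
    using S by (auto simp: unitv_def abar_def sub_feasible_def coll_def if_distrib cong: if_cong)
qed

lemma rlo_obj_at_unitv:
  assumes "\<alpha> \<in> coll Js"
  shows "rlo_obj b xh (abar a Js \<alpha> k xh) (unitv k) = sub_obj a b Js xh k \<alpha>"
  unfolding rlo_obj_def sub_obj_eq_sum[OF assms] abar_mult_self[OF assms]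
  by (simp add: unitv_def if_distrib cong: if_cong)

lemma abar_nonzero:
  assumes S: "sub_feasible a b Js \<Omega> xh \<alpha>"
    and row: "0 < b i \<or> (\<exists>j. j \<notin> Js i \<and> a i j \<noteq> 0)"
  shows "abar a Js \<alpha> i x \<noteq> (\<lambda>j. 0)"
proof
  assume zero: "abar a Js \<alpha> i x = (\<lambda>j. 0)"
  have coll: "\<alpha> \<in> coll Js" using S by (simp add: sub_feasible_def)
  have off: "a i j = 0" if "j \<notin> Js i" for j
    using fun_cong[OF zero, of j] that by (simp add: abar_def)
  have "a i j * xh j \<le> \<alpha> i j * \<bar>xh j\<bar>" for j
  proof (cases "j \<in> Js i")
    case True
    then have "a i j = sgnp (x j) * \<alpha> i j"
      using fun_cong[OF zero, of j] by (simp add: abar_def)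
    then have "\<bar>a i j\<bar> = \<alpha> i j"
      using sub_feasible_nonneg[OF S] by (simp add: sgnp_def)
    then show ?thesis by (metis abs_ge_self abs_mult)
  next
    case False
    then show ?thesis using off coll by (simp add: coll_def)
  qed
  then have "(\<Sum>j\<in>UNIV. a i j * xh j) \<le> (\<Sum>j\<in>Js i. \<alpha> i j * \<bar>xh j\<bar>)"
    unfolding coll_sum_row[OF coll] by (rule sum_mono)
  moreover have "b i \<le> (\<Sum>j\<in>UNIV. a i j * xh j) - (\<Sum>j\<in>Js i. \<alpha> i j * \<bar>xh j\<bar>)"
    using S by (simp add: sub_feasible_def)
  ultimately have "b i \<le> 0" by linarith
  with row off show False by force
qed

theorem theorem3:
  fixes a :: "'i::finite \<Rightarrow> 'j::finite \<Rightarrow> real"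
    and b :: "'i \<Rightarrow> real"
    and Js :: "'i \<Rightarrow> 'j set"
    and \<Omega> :: "('i \<Rightarrow> 'j \<Rightarrow> real) set"
    and xh :: "'j \<Rightarrow> real"
    and \<alpha>opt :: "'i \<Rightarrow> 'i \<Rightarrow> 'j \<Rightarrow> real"
    and t :: "'i \<Rightarrow> real"
    and istar :: 'i
  assumes Js_ne: "\<forall>i. Js i \<noteq> {}"
    and \<Omega>_coll: "\<Omega> \<subseteq> coll Js"
    and \<Omega>_convex: "convex_coll \<Omega>"
    and opt_feas: "\<forall>ih. sub_feasible a b Js \<Omega> xh (\<alpha>opt ih)"
    and opt_min: "\<forall>ih \<alpha>. sub_feasible a b Js \<Omega> xh \<alpha> \<longrightarrow>
                     sub_obj a b Js xh ih (\<alpha>opt ih) \<le> sub_obj a b Js xh ih \<alpha>"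
    and t_def: "\<forall>ih. t ih = sub_obj a b Js xh ih (\<alpha>opt ih)"
    and istar_min: "\<forall>ih. t istar \<le> t ih"
  shows "(\<forall>\<alpha> c u \<pi> lam \<mu>. rlo_feasible a b Js \<Omega> xh \<alpha> c u \<pi> lam \<mu> \<longrightarrow> t istar \<le> rlo_obj b xh c \<pi>)
       \<and> (\<exists>u lam \<mu>.
            rlo_feasible a b Js \<Omega> xh (\<alpha>opt istar) (abar a Js (\<alpha>opt istar) istar xh) u (unitv istar) lam \<mu>
          \<and> rlo_obj b xh (abar a Js (\<alpha>opt istar) istar xh) (unitv istar) = t istar
          \<and> ((\<forall>i. b i > 0 \<or> (\<exists>j. j \<notin> Js i \<and> a i j \<noteq> 0)) \<longrightarrow>
               abar a Js (\<alpha>opt istar) istar xh \<noteq> (\<lambda>j. 0)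
             \<and> (\<forall>i x. abar a Js (\<alpha>opt istar) i x \<noteq> (\<lambda>j. 0))))"
proof -
  have S: "sub_feasible a b Js \<Omega> xh (\<alpha>opt istar)" using opt_feas by simp
  have bound: "t istar \<le> sub_obj a b Js xh i \<alpha>" if "sub_feasible a b Js \<Omega> xh \<alpha>" for i \<alpha>
    using that opt_min t_def istar_min order_trans by metis
  have "rlo_obj b xh (abar a Js (\<alpha>opt istar) istar xh) (unitv istar) = t istar"
    using S by (simp add: t_def rlo_obj_at_unitv sub_feasible_def)
  then show ?thesis
    using rlo_obj_lower_bound[OF _ bound] rlo_feasible_at_unitv[OF S] abar_nonzero[OF S]
    by blast
qed

end
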